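(* Let $c\ge 3$ be an integer and $\lambda,\mu,\alpha>0$ with $\lambda<c\mu$. Let $(\pi_{i,j})_{(i,j)\in\mathcal S}$ be the stationary distribution of the continuous-time Markov chain on $\mathcal S=\{(i,j):0\le i\le c,\ j\ge i\}$ whose only transitions are: $(i,j)\to(i,j+1)$ at rate $\lambda$; $(i,j)\to(i+1,j)$ at rate $\min(j-i,c-i)\alpha$ for $i<c$, $j>i$; $(i,j)\to(i,j-1)$ at rate $i\mu$ for $i\ge1$, $j>i$; $(i,i)\to(i-1,i-1)$ at rate $i\mu$ for $i\ge 1$. For $k=1,\dots,c-1$ let $f_k(z)=(\lambda+k\mu+(c-k)\alpha)z-\lambda z^2-k\mu$ and let $z_k=\frac{\lambda+k\mu+(c-k)\alpha-\sqrt{(\lambda+k\mu+(c-k)\alpha)^2-4k\lambda\mu}}{2\lambda}$, $\hat z_k=\frac{\lambda+k\mu+(c-k)\alpha+\sqrt{(\lambda+k\mu+(c-k)\alpha)^2-4k\lambda\mu}}{2\lambda}$ be its roots ($0<z_k<1<\hat z_k$); let $\hat z_0=(\lambda+c\alpha)/\lambda$. For $k=0,\dots,c-1$ let $\widehat\Pi_k(z)=\sum_{j\ge c}\pi_{k,j}z^{j-k}$. Define constants $A_{k,j}$ ($1\le k\le c-1$, $0\le j\le k$) recursively by $A_{1,0}=\frac{c\alpha\pi_{0,c-1}\hat z_0}{f_1(\hat z_0)}$, $A_{1,1}=\pi_{1,c-1}-A_{1,0}$, and for $k\ge2$: $$A_{k,j}=\frac{(c-k+1)\alpha A_{k-1,j}\hat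 z_j}{f_k(\hat z_j)}\ (0\le j\le k-1),\qquad A_{k,k}=-(c-k+1)\alpha\sum_{j=0}^{k-1}\frac{A_{k-1,j}\hat z_j}{f_k(\hat z_j)}+\pi_{k,c-1}.$$ Fix $i\in\{2,\dots,c-1\}$. Define $a^{(i)}_c=\frac{(c-i+1)\alpha\widehat\Pi_{i-1}(z_i)}{i\mu z_i^{c-i}}$, $b^{(i)}_c=\frac{\lambda z_i}{i\mu}$, and for $j=c-1,\dots,i+1$, $$a^{(i)}_j=\frac{(j-i+1)\alpha\pi_{i-1,j}+i\mu a^{(i)}_{j+1}}{\lambda+i\mu+(j-i)\alpha-i\mu b^{(i)}_{j+1}},\qquad b^{(i)}_j=\frac{\lambda}{\lambda+i\mu+(j-i)\alpha-i\mu b^{(i)}_{j+1}}.$$ Then: (i) $\pi_{i,j}=a^{(i)}_j+b^{(i)}_j\pi_{i,j-1}$ for $j=i+1,\dots,c$; (ii) $a^{(i)}_j>0$ and $0<b^{(i)}_j<\frac{\lambda}{i\mu}$ for $j=i+1,\dots,c$; (iii) if $\hat z_0,\hat z_1,\dots,\hat z_{c-1}$ are pairwise distinct, then for all complex $z$ with $|z|\le1$, $$\widehat\Pi_i(z)=z^{c-i}\sum_{j=0}^{i}\frac{A_{i,j}}{\hat z_j-z}.$$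
   Context: The chain models an M/M/$c$ queue with setup times under the ON-OFF policy: $i$ is the number of busy servers, $j$ the number of jobs; arrivals Poisson($\lambda$), services exp($\mu$), setups exp($\alpha$). The condition $\lambda<c\mu$ guarantees a unique stationary distribution. *)

theory Defs
  imports "HOL-Analysis.Analysis"
begin

text \<open>State space S = {(i,j). 0 <= i <= c, j >= i}; i = busy servers, j = jobs.\<close>
definition state_space :: "nat \<Rightarrow> (nat \<times> nat) set" where
  "state_space c = {(i, j). i \<le> c \<and> i \<le> j}"

definition rate :: "nat \<Rightarrow> real \<Rightarrow> real \<Rightarrow> real \<Rightarrow> nat \<times> nat \<Rightarrow> nat \<times> nat \<Rightarrow> real" where
  "rate c la mu al s t =
     (let (i, j) = s; (i', j') = t in
      if i' = i \<and> j' = j + 1 then la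
      else if i < c \<and> j > i \<and> i' = i + 1 \<and> j' = j then real (min (j - i) (c - i)) * al
      else if i \<ge> 1 \<and> j > i \<and> i' = i \<and> j' + 1 = j then real i * mu
      else if i \<ge> 1 \<and> j = i \<and> i' + 1 = i \<and> j' + 1 = j then real i * mu
      else 0)"

definition stationary :: "nat \<Rightarrow> real \<Rightarrow> real \<Rightarrow> real \<Rightarrow> (nat \<times> nat \<Rightarrow> real) \<Rightarrow> bool" where
  "stationary c la mu al p \<longleftrightarrow>
     (\<forall>s\<in>state_space c. p s \<ge> 0) \<and>
     (p has_sum 1) (state_space c) \<and>
     (\<forall>s\<in>state_space c.
        p s * (\<Sum>\<^sub>\<infinity>t\<in>state_space c - {s}. rate c la mu al s t) =
        (\<Sum>\<^sub>\<infinity>t\<in>state_space c - {s}. p t * rate c la mu al t s))"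

definition fk :: "nat \<Rightarrow> real \<Rightarrow> real \<Rightarrow> real \<Rightarrow> nat \<Rightarrow> real \<Rightarrow> real" where
  "fk c la mu al k z = (la + real k * mu + (real c - real k) * al) * z - la * z^2 - real k * mu"

definition zk :: "nat \<Rightarrow> real \<Rightarrow> real \<Rightarrow> real \<Rightarrow> nat \<Rightarrow> real" where
  "zk c la mu al k =
     (la + real k * mu + (real c - real k) * al
       - sqrt ((la + real k * mu + (real c - real k) * al)^2 - 4 * real k * la * mu)) / (2 * la)"

definition zhat :: "nat \<Rightarrow> real \<Rightarrow> real \<Rightarrow> real \<Rightarrow> nat \<Rightarrow> real" where
  "zhat c la mu al k =
     (if k = 0 then (la + real c * al) / la
      else (la + real k * mu + (real c - real k) * al
       + sqrt ((la + real k * mu + (real c - real k) * al)^2 - 4 * real k * la * mu)) / (2 * la))"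

definition Pihat :: "nat \<Rightarrow> (nat \<times> nat \<Rightarrow> real) \<Rightarrow> nat \<Rightarrow> 'a::real_normed_field \<Rightarrow> 'a" where
  "Pihat c p k z = (\<Sum>n. of_real (p (k, c + n)) * z ^ (c + n - k))"

fun Acoef :: "nat \<Rightarrow> real \<Rightarrow> real \<Rightarrow> real \<Rightarrow> (nat \<times> nat \<Rightarrow> real) \<Rightarrow> nat \<Rightarrow> nat \<Rightarrow> real" where
  "Acoef c la mu al p 0 j = 0"
| "Acoef c la mu al p (Suc 0) j =
     (let A10 = real c * al * p (0, c - 1) * zhat c la mu al 0 / fk c la mu al 1 (zhat c la mu al 0) in
      if j = 0 then A10 else if j = 1 then p (1, c - 1) - A10 else 0)"
| "Acoef c la mu al p (Suc (Suc m)) j =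
     (let k = Suc (Suc m) in
      if j < k then
        (real c - real k + 1) * al * Acoef c la mu al p (Suc m) j * zhat c la mu al j
          / fk c la mu al k (zhat c la mu al j)
      else if j = k then
        - (real c - real k + 1) * al *
          (\<Sum>l<k. Acoef c la mu al p (Suc m) l * zhat c la mu al l / fk c la mu al k (zhat c la mu al l))
        + p (k, c - 1)
      else 0)"

text \<open>Backward recursion for (a^(i)_j, b^(i)_j): abrec ... i m = (a^(i)_{c-m}, b^(i)_{c-m}).\<close>
fun abrec :: "nat \<Rightarrow> real \<Rightarrow> real \<Rightarrow> real \<Rightarrow> (nat \<times> nat \<Rightarrow> real) \<Rightarrow> nat \<Rightarrow> nat \<Rightarrow> real \<times> real" where
  "abrec c la mu al p i 0 =
     ((real c - real i + 1) * al * Pihat c p (i - 1) (zk c la mu al i)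
        / (real i * mu * zk c la mu al i ^ (c - i)),
      la * zk c la mu al i / (real i * mu))"
| "abrec c la mu al p i (Suc m) =
     (let j = c - Suc m; (a', b') = abrec c la mu al p i m;
          d = la + real i * mu + (real j - real i) * al - real i * mu * b' in
      (((real j - real i + 1) * al * p (i - 1, j) + real i * mu * a') / d, la / d))"

definition acoef :: "nat \<Rightarrow> real \<Rightarrow> real \<Rightarrow> real \<Rightarrow> (nat \<times> nat \<Rightarrow> real) \<Rightarrow> nat \<Rightarrow> nat \<Rightarrow> real" where
  "acoef c la mu al p i j = fst (abrec c la mu al p i (c - j))"

definition bcoef :: "nat \<Rightarrow> real \<Rightarrow> real \<Rightarrow> real \<Rightarrow> (nat \<times> nat \<Rightarrow> real) \<Rightarrow> nat \<Rightarrow> nat \<Rightarrow> real" where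
  "bcoef c la mu al p i j = snd (abrec c la mu al p i (c - j))"

end

theory Submission
  imports Defs
begin

(* Parts (i) and (ii) come from the balance equations along row i.  At level c, the generating-function
   identity  f_i(z) Pihat_i(z) = la p(i,c-1) z^(c-i+1) + (c-i+1) al Pihat_(i-1)(z) - i mu p(i,c) z^(c-i)
   evaluated at the root z_i in (0,1) of f_i gives p(i,c) = a_c + b_c p(i,c-1).  Substituting
   p(i,j+1) = a_(j+1) + b_(j+1) p(i,j) into the balance equation at (i,j) yields the backward recursion;
   b_(j+1) < la/(i mu) keeps every denominator above i mu.  Positivity of a_c holds because no row of an
   irreducible chain has a vanishing tail.
   For (iii) induct on i.  Row 0 is geometric with ratio 1/zhat_0.  Given the expansion of Pihat_(i-1),
   the same identity and a partial-fraction computation show that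
   (z - z_i)(z - zhat_i)(Pihat_i(z) - expansion) = E z^(c-i) for a constant E; evaluating at z_i gives
   E = 0, so the expansion holds off z_i, and at z_i by continuity. *)

lemma infsum_eq_sum_on_support:
  fixes f :: "'a \<Rightarrow> 'b::{comm_monoid_add, t2_space}"
  assumes "finite T" and "\<And>x. x \<in> A - T \<Longrightarrow> f x = 0" and "\<And>x. x \<in> T - A \<Longrightarrow> f x = 0"
  shows "infsum f A = sum f T"
proof -
  have "infsum f A = infsum f T" by (rule infsum_cong_neutral) (use assms in auto)
  thus ?thesis using assms(1) by simp
qed

lemma continuous_on_eq_at_interior_point:
  fixes f g :: "'a::{perfect_space, t2_space} \<Rightarrow> 'b::t2_space"
  assumes "continuous_on S f" and "continuous_on S g" and "x \<in> interior S"
    and "\<And>y. y \<in> S \<Longrightarrow> y \<noteq> x \<Longrightarrow> f y = g y"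
  shows "f x = g x"
proof -
  have "(f \<longlongrightarrow> f x) (at x)" and "(g \<longlongrightarrow> g x) (at x)"
    using continuous_on_interior[OF assms(1,3)] continuous_on_interior[OF assms(2,3)]
    by (simp_all add: isCont_def)
  moreover have "eventually (\<lambda>y. f y = g y) (at x)"
    using eventually_at_in_open[OF open_interior assms(3)] interior_subset assms(4)
    by (auto elim!: eventually_mono)
  ultimately show ?thesis
    by (metis tendsto_cong tendsto_unique trivial_limit_at)
qed

lemma quadratic_partial_fraction_term:
  fixes z w a b B l m Q :: "'a::field"
  assumes f: "\<And>x. f x = B * x - l * x^2 - m" and "w \<noteq> z" and "a * f w = Q * b * w"
  shows "f z * (a / (w - z)) - Q * z * (b / (w - z)) = l * z * a + (a * (l * w - B) + Q * b)"
proof -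
  have "f z * a = a * f w + (w - z) * a * (l * (z + w) - B)"
    unfolding f by (simp add: power2_eq_square algebra_simps)
  hence "f z * a - Q * z * b = (w - z) * (l * z * a + (a * (l * w - B) + Q * b))"
    using assms(3) by (simp add: algebra_simps)
  moreover have "f z * (a / (w - z)) - Q * z * (b / (w - z)) = (f z * a - Q * z * b) / (w - z)"
    by (simp add: diff_divide_distrib)
  ultimately show ?thesis using assms(2) by simp
qed

lemma sum_quadratic_partial_fractions:
  fixes z B l m Q :: "'a::field" and w a b :: "'i \<Rightarrow> 'a"
  assumes f: "\<And>x. f x = B * x - l * x^2 - m"
    and "\<And>j. j \<in> J \<Longrightarrow> w j \<noteq> z" and "\<And>j. j \<in> J \<Longrightarrow> a j * f (w j) = Q * b j * w j"
  shows "f z * (\<Sum>j\<in>J. a j / (w j - z)) - Q * z * (\<Sum>j\<in>J. b j / (w j - z))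
       = l * z * (\<Sum>j\<in>J. a j) + (\<Sum>j\<in>J. a j * (l * w j - B) + Q * b j)"
proof -
  have "f z * (\<Sum>j\<in>J. a j / (w j - z)) - Q * z * (\<Sum>j\<in>J. b j / (w j - z))
      = (\<Sum>j\<in>J. f z * (a j / (w j - z)) - Q * z * (b j / (w j - z)))"
    by (simp add: sum_distrib_left sum_subtractf)
  also have "\<dots> = (\<Sum>j\<in>J. l * z * a j + (a j * (l * w j - B) + Q * b j))"
    using quadratic_partial_fraction_term[OF f assms(2,3)] by simp
  finally show ?thesis by (simp add: sum.distrib sum_distrib_left)
qed

lemma fk_discriminant_nonneg:
  assumes "la > 0" and "mu > 0" and "al > 0" and "k < c"
  shows "(la + real k * mu + (real c - real k) * al)^2 - 4 * real k * la * mu \<ge> 0"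
proof -
  have "(la + real k * mu)^2 \<le> (la + real k * mu + (real c - real k) * al)^2"
    using assms by (intro power_mono) auto
  hence "(la + real k * mu + (real c - real k) * al)^2 - 4 * real k * la * mu \<ge> (la - real k * mu)^2"
    by (simp add: power2_eq_square algebra_simps)
  thus ?thesis by (smt (verit) zero_le_power2)
qed

lemma fk_factor:
  assumes la: "la > 0" and mu: "mu > 0" and al: "al > 0" and "1 \<le> k" and kc: "k < c"
  shows "fk c la mu al k x = - la * (x - zk c la mu al k) * (x - zhat c la mu al k)"
proof -
  define B where "B = la + real k * mu + (real c - real k) * al"
  define s where "s = sqrt (B^2 - 4 * real k * la * mu)"
  have s2: "s^2 = B^2 - 4 * real k * la * mu"
    using fk_discriminant_nonneg[OF la mu al kc] unfolding s_def B_def by simp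
  have "- la * (x - (B - s) / (2*la)) * (x - (B + s) / (2*la)) = B * x - la * x^2 - (B^2 - s^2) / (4*la)"
    using la by (simp add: field_simps power2_eq_square)
  also have "\<dots> = fk c la mu al k x" using la unfolding s2 fk_def B_def by simp
  finally show ?thesis
    using assms(4) unfolding zk_def zhat_def B_def s_def by simp
qed

lemma zk_zhat_bounds:
  assumes la: "la > 0" and mu: "mu > 0" and al: "al > 0" and k1: "1 \<le> k" and kc: "k < c"
  shows "0 < zk c la mu al k" and "zk c la mu al k < 1" and "1 < zhat c la mu al k"
proof -
  (* f_k(1) > 0 > f_k(0) and the negative leading coefficient put the roots in (0,1) and (1,oo). *)
  note fac = fk_factor[OF assms]
  have "zk c la mu al k \<le> zhat c la mu al k"
    unfolding zk_def zhat_def using k1 la fk_discriminant_nonneg[OF la mu al kc]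
    by (simp add: divide_right_mono)
  moreover have "(1 - zk c la mu al k) * (1 - zhat c la mu al k) < 0"
  proof -
    have "fk c la mu al k 1 = (real c - real k) * al" by (simp add: fk_def)
    moreover have "(real c - real k) * al > 0" using kc al by simp
    ultimately have "la * ((1 - zk c la mu al k) * (1 - zhat c la mu al k)) < 0"
      using fac[of 1] by (simp add: mult.assoc)
    thus ?thesis using la by (simp add: mult_less_0_iff)
  qed
  ultimately show "zk c la mu al k < 1" and "1 < zhat c la mu al k"
    by (auto simp: mult_less_0_iff)
  have "fk c la mu al k 0 = - real k * mu" by (simp add: fk_def)
  hence "la * (zk c la mu al k * zhat c la mu al k) > 0" using fac[of 0] k1 mu by (simp add: mult.assoc)
  hence "zk c la mu al k * zhat c la mu al k > 0" using la by (simp add: zero_less_mult_iff)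
  thus "0 < zk c la mu al k" using \<open>1 < zhat c la mu al k\<close> by (simp add: zero_less_mult_iff)
qed

lemma one_less_zhat:
  assumes "la > 0" and "mu > 0" and "al > 0" and "j < c"
  shows "1 < zhat c la mu al j"
proof (cases "j = 0")
  case True thus ?thesis using assms by (simp add: zhat_def field_simps)
next
  case False thus ?thesis using zk_zhat_bounds(3)[OF assms(1-3) _ assms(4)] by simp
qed

lemma fk_factor_of_real:
  fixes z :: "'a::real_field"
  assumes "la > 0" and "mu > 0" and "al > 0" and "1 \<le> k" and "k < c"
  shows "of_real (la + real k * mu + (real c - real k) * al) * z - of_real la * z^2 - of_real (real k * mu)
       = - of_real la * (z - of_real (zk c la mu al k)) * (z - of_real (zhat c la mu al k))"
proof -
  note fac = fk_factor[OF assms]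
  have prod: "real k * mu = la * zk c la mu al k * zhat c la mu al k"
    using fac[of 0] by (simp add: fk_def)
  moreover have "la + real k * mu + (real c - real k) * al = la * (zk c la mu al k + zhat c la mu al k)"
    using fac[of 1] prod by (simp add: fk_def algebra_simps)
  ultimately show ?thesis by (simp add: power2_eq_square algebra_simps)
qed

lemma zhat_outside_unit_disc:
  fixes z :: "'a::real_normed_algebra_1"
  assumes "la > 0" and "mu > 0" and "al > 0" and "j < c" and "norm z \<le> 1"
  shows "of_real (zhat c la mu al j) \<noteq> z"
  using one_less_zhat[OF assms(1-4)] assms(5) by auto

lemma rate_nonneg: "la \<ge> 0 \<Longrightarrow> mu \<ge> 0 \<Longrightarrow> al \<ge> 0 \<Longrightarrow> rate c la mu al s t \<ge> 0"
  by (auto simp: rate_def Let_def split: prod.splits)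

lemma rate_nonzero_imp_near:
  "rate c la mu al s t \<noteq> 0 \<Longrightarrow> fst s \<le> Suc (fst t) \<and> snd s \<le> Suc (snd t)"
  by (cases s, cases t) (auto simp: rate_def split: if_splits)

lemma rate_arrival: "rate c la mu al (k, j) (k, Suc j) = la"
  by (simp add: rate_def)

lemma rate_setup: "k < c \<Longrightarrow> k < j \<Longrightarrow> rate c la mu al (k, j) (Suc k, j) = real (min (j - k) (c - k)) * al"
  by (simp add: rate_def)

lemma rate_service: "1 \<le> k \<Longrightarrow> k \<le> j \<Longrightarrow> rate c la mu al (k, Suc j) (k, j) = real k * mu"
  by (simp add: rate_def)

lemma rate_switch_off: "rate c la mu al (Suc m, Suc m) (m, m) = real (Suc m) * mu"
  by (simp add: rate_def)

lemma acoef_bcoef_at_c: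
  "acoef c la mu al p i c = (real c - real i + 1) * al * Pihat c p (i - 1) (zk c la mu al i)
                              / (real i * mu * zk c la mu al i ^ (c - i))"
  "bcoef c la mu al p i c = la * zk c la mu al i / (real i * mu)"
  by (simp_all add: acoef_def bcoef_def)

lemma acoef_bcoef_below_c:
  fixes c i j :: nat and la mu al :: real and p :: "nat \<times> nat \<Rightarrow> real"
  assumes "j < c"
  defines "d \<equiv> la + real i * mu + (real j - real i) * al - real i * mu * bcoef c la mu al p i (Suc j)"
  shows "acoef c la mu al p i j
           = ((real j - real i + 1) * al * p (i - 1, j) + real i * mu * acoef c la mu al p i (Suc j)) / d"
    and "bcoef c la mu al p i j = la / d"
proof -
  have "c - j = Suc (c - Suc j)" and "c - Suc (c - Suc j) = j" using assms(1) by simp_all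
  thus "acoef c la mu al p i j
           = ((real j - real i + 1) * al * p (i - 1, j) + real i * mu * acoef c la mu al p i (Suc j)) / d"
    and "bcoef c la mu al p i j = la / d"
    unfolding acoef_def bcoef_def d_def by (simp_all add: Let_def split_def)
qed

(* Setting A(0,0) = p(0,c-1) gives row 0 the same partial-fraction form as the other rows
   (Pihat_idle_row) and makes the defining recursion of A(1,j) an instance of the one for k >= 2. *)
definition Acoef_ext :: "nat \<Rightarrow> real \<Rightarrow> real \<Rightarrow> real \<Rightarrow> (nat \<times> nat \<Rightarrow> real) \<Rightarrow> nat \<Rightarrow> nat \<Rightarrow> real" where
  "Acoef_ext c la mu al p k j =
     (if k = 0 then (if j = 0 then p (0, c - 1) else 0) else Acoef c la mu al p k j)"

lemma Acoef_ext_rec: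
  assumes "1 \<le> k"
  shows "Acoef_ext c la mu al p k j =
    (if j < k then (real c - real k + 1) * al * Acoef_ext c la mu al p (k - 1) j * zhat c la mu al j
                     / fk c la mu al k (zhat c la mu al j)
     else if j = k then - (real c - real k + 1) * al *
       (\<Sum>l<k. Acoef_ext c la mu al p (k - 1) l * zhat c la mu al l / fk c la mu al k (zhat c la mu al l))
       + p (k, c - 1)
     else 0)"
proof -
  obtain m where "k = Suc m" using assms by (cases k) auto
  thus ?thesis by (cases m) (simp_all add: Acoef_ext_def Let_def)
qed

lemma sum_Acoef_ext:
  assumes "1 \<le> k"
  shows "(\<Sum>j\<le>k. Acoef_ext c la mu al p k j) = p (k, c - 1)"
proof -
  define X where "X = (\<Sum>l<k. Acoef_ext c la mu al p (k - 1) l * zhat c la mu al l / fk c la mu al k (zhat c la mu al l))"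
  have "(\<Sum>j<k. Acoef_ext c la mu al p k j) = (real c - real k + 1) * al * X"
    unfolding X_def sum_distrib_left by (rule sum.cong) (use Acoef_ext_rec[OF assms] in auto)
  moreover have "Acoef_ext c la mu al p k k = - (real c - real k + 1) * al * X + p (k, c - 1)"
    using Acoef_ext_rec[OF assms, of c la mu al p k] unfolding X_def by simp
  ultimately show ?thesis by (simp add: lessThan_Suc_atMost[symmetric] algebra_simps)
qed

lemma Acoef_ext_eq_0: "k < j \<Longrightarrow> Acoef_ext c la mu al p k j = 0"
proof (cases k)
  case 0 thus "k < j \<Longrightarrow> ?thesis" by (simp add: Acoef_ext_def)
qed (simp add: Acoef_ext_rec)

lemma Acoef_ext_times_fk:
  assumes "la > 0" and "mu > 0" and "al > 0" and "1 \<le> k" and "k < c" and "j \<le> k"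
    and inj: "inj_on (zhat c la mu al) {0..c - 1}"
  shows "Acoef_ext c la mu al p k j * fk c la mu al k (zhat c la mu al j)
       = (real c - real k + 1) * al * Acoef_ext c la mu al p (k - 1) j * zhat c la mu al j"
proof (cases "j = k")
  case True
  thus ?thesis using fk_factor[OF assms(1-5)] Acoef_ext_eq_0[of "k - 1" k] assms(4) by simp
next
  case False
  hence "j < k" using assms(6) by simp
  have "zhat c la mu al j \<noteq> zk c la mu al k"
    using one_less_zhat[OF assms(1-3) less_trans[OF \<open>j < k\<close> assms(5)]] zk_zhat_bounds[OF assms(1-5)]
    by simp
  moreover have "zhat c la mu al j \<noteq> zhat c la mu al k"
    using inj_onD[OF inj, of j k] \<open>j < k\<close> assms(5) by (auto; linarith)
  ultimately have "fk c la mu al k (zhat c la mu al j) \<noteq> 0"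
    using fk_factor[OF assms(1-5)] assms(1) by simp
  thus ?thesis using Acoef_ext_rec[OF assms(4), of c la mu al p j] \<open>j < k\<close> by simp
qed

locale on_off_queue =
  fixes c :: nat and la mu al :: real and p :: "nat \<times> nat \<Rightarrow> real"
  assumes la_pos: "la > 0" and mu_pos: "mu > 0" and al_pos: "al > 0"
    and stationary: "stationary c la mu al p"
begin

abbreviation S where "S \<equiv> state_space c"
abbreviation rt where "rt \<equiv> rate c la mu al"

lemma p_nonneg: "s \<in> S \<Longrightarrow> p s \<ge> 0"
  using stationary by (simp add: stationary_def)

lemma global_balance:
  "s \<in> S \<Longrightarrow> p s * (\<Sum>\<^sub>\<infinity>t\<in>S - {s}. rt s t) = (\<Sum>\<^sub>\<infinity>t\<in>S - {s}. p t * rt t s)"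
  using stationary by (simp add: stationary_def)

lemma balance_busy:
  assumes "1 \<le> k" and "k < c" and "k < j"
  shows "p (k, j) * (la + real (min (j - k) (c - k)) * al + real k * mu)
       = la * p (k, j - 1) + real (min (j - k + 1) (c - k + 1)) * al * p (k - 1, j)
         + real k * mu * p (k, j + 1)"
proof -
  have out: "(\<Sum>\<^sub>\<infinity>t\<in>S - {(k, j)}. rt (k, j) t) = (\<Sum>t\<in>{(k, j + 1), (k + 1, j), (k, j - 1)}. rt (k, j) t)"
    by (rule infsum_eq_sum_on_support)
      (use assms in \<open>auto simp: state_space_def rate_def Let_def split: prod.splits\<close>)
  have "in": "(\<Sum>\<^sub>\<infinity>t\<in>S - {(k, j)}. p t * rt t (k, j))
      = (\<Sum>t\<in>{(k, j - 1), (k - 1, j), (k, j + 1)}. p t * rt t (k, j))"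
    by (rule infsum_eq_sum_on_support)
      (use assms in \<open>auto simp: state_space_def rate_def Let_def split: prod.splits\<close>)
  have out_val: "(\<Sum>t\<in>{(k, j + 1), (k + 1, j), (k, j - 1)}. rt (k, j) t)
      = la + real (min (j - k) (c - k)) * al + real k * mu"
    using assms by (simp add: rate_def Let_def) (use assms in arith)
  have in_val: "(\<Sum>t\<in>{(k, j - 1), (k - 1, j), (k, j + 1)}. p t * rt t (k, j))
      = la * p (k, j - 1) + real (min (j - k + 1) (c - k + 1)) * al * p (k - 1, j)
        + real k * mu * p (k, j + 1)"
    using assms by (simp add: rate_def Let_def Suc_diff_le) (use assms in arith)
  have "(k, j) \<in> S" using assms by (simp add: state_space_def)
  from global_balance[OF this] show ?thesis unfolding out "in" out_val in_val .
qed

lemma balance_busy_below_c: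
  assumes "1 \<le> k" and "k < j" and "j \<le> c"
  shows "p (k, j) * (la + real k * mu + (real j - real k) * al)
       = la * p (k, j - 1) + (real j - real k + 1) * al * p (k - 1, j) + real k * mu * p (k, j + 1)"
  using balance_busy[of k j] assms by (simp add: of_nat_diff algebra_simps)

lemma balance_busy_tail:
  assumes "1 \<le> k" and "k < c" and "c \<le> j"
  shows "p (k, j) * (la + real k * mu + (real c - real k) * al)
       = la * p (k, j - 1) + (real c - real k + 1) * al * p (k - 1, j) + real k * mu * p (k, j + 1)"
  using balance_busy[of k j] assms by (simp add: of_nat_diff algebra_simps)

lemma balance_idle:
  assumes "1 \<le> c" and "1 \<le> j"
  shows "p (0, j) * (la + real (min j c) * al) = la * p (0, j - 1)"
proof -
  have out: "(\<Sum>\<^sub>\<infinity>t\<in>S - {(0, j)}. rt (0, j) t) = (\<Sum>t\<in>{(0, j + 1), (1, j)}. rt (0, j) t)"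
    by (rule infsum_eq_sum_on_support)
      (use assms in \<open>auto simp: state_space_def rate_def Let_def split: prod.splits\<close>)
  have "in": "(\<Sum>\<^sub>\<infinity>t\<in>S - {(0, j)}. p t * rt t (0, j)) = (\<Sum>t\<in>{(0, j - 1)}. p t * rt t (0, j))"
    by (rule infsum_eq_sum_on_support)
      (use assms in \<open>auto simp: state_space_def rate_def Let_def split: prod.splits\<close>)
  have "(0, j) \<in> S" by (simp add: state_space_def)
  from global_balance[OF this] show ?thesis
    unfolding out "in" using assms by (simp add: rate_def Let_def)
qed

lemma zero_propagates_back:
  assumes "s \<in> S" and "t \<in> S" and "t \<noteq> s" and "p s = 0" and "rt t s > 0"
  shows "p t = 0"
proof -
  define N where "N = (S - {s}) \<inter> ({..fst s + 1} \<times> {..snd s + 1})"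
  have fin: "finite N" by (simp add: N_def)
  have "(\<Sum>u\<in>N. p u * rt u s) = (\<Sum>\<^sub>\<infinity>u\<in>S - {s}. p u * rt u s)"
  proof (rule infsum_eq_sum_on_support[symmetric, OF fin])
    fix u assume "u \<in> S - {s} - N"
    hence "\<not> (fst u \<le> Suc (fst s) \<and> snd u \<le> Suc (snd s))" by (auto simp: N_def mem_Times_iff)
    thus "p u * rt u s = 0" using rate_nonzero_imp_near[of c la mu al u s] by auto
  qed (auto simp: N_def)
  also have "\<dots> = 0" using global_balance[OF assms(1)] assms(4) by simp
  finally have sum0: "(\<Sum>u\<in>N. p u * rt u s) = 0" .
  have nonneg: "p u * rt u s \<ge> 0" if "u \<in> N" for u
  proof -
    have "p u \<ge> 0" using that p_nonneg by (simp add: N_def)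
    thus ?thesis using rate_nonneg[of la mu al] la_pos mu_pos al_pos by simp
  qed
  have "fst t \<le> Suc (fst s) \<and> snd t \<le> Suc (snd s)"
    using rate_nonzero_imp_near[of c la mu al t s] assms(5) by simp
  hence "t \<in> N" using assms(2,3) by (auto simp: N_def mem_Times_iff)
  hence "p t * rt t s = 0" using sum_nonneg_eq_0_iff[where f = "\<lambda>u. p u * rt u s", OF fin nonneg] sum0 by blast
  thus ?thesis using assms(5) by simp
qed

lemma row_zero_from_tail:
  assumes tail: "\<forall>j\<ge>n. p (k, j) = 0" and "k \<le> c"
  shows "\<forall>j\<ge>k. p (k, j) = 0"
proof (intro allI impI)
  fix j assume "k \<le> j"
  show "p (k, j) = 0"
  proof (cases "n \<le> j")
    case False
    hence "j \<le> n" by simp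
    thus ?thesis
    proof (induction rule: inc_induct)
      case (step m)
      show ?case
      proof (rule zero_propagates_back[of "(k, Suc m)"])
        show "(k, Suc m) \<in> S" "(k, m) \<in> S"
          using step \<open>k \<le> j\<close> \<open>k \<le> c\<close> by (simp_all add: state_space_def)
      qed (use step(3) la_pos in \<open>simp_all add: rate_arrival\<close>)
    qed (use tail in simp)
  qed (use tail in simp)
qed

lemma zero_row_pred:
  assumes row: "\<forall>j\<ge>m. p (m, j) = 0" and "1 \<le> m" and "m \<le> c"
  shows "\<forall>j\<ge>m - 1. p (m - 1, j) = 0"
proof -
  obtain l where m: "m = Suc l" using assms(2) by (cases m) auto
  have above: "p (l, j) = 0" if "m \<le> j" for j
  proof (rule zero_propagates_back[of "(m, j)"])
    show "(m, j) \<in> S" "(l, j) \<in> S" "p (m, j) = 0" using that row assms(3) m by (auto simp: state_space_def)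
    show "rt (l, j) (m, j) > 0" using that assms(3) m al_pos by (simp add: rate_setup)
  qed (use m in simp)
  have "p (l, l) = 0"
    using zero_propagates_back[of "(l, m)" "(l, l)"] above[of m] assms(3) la_pos m
    by (simp add: state_space_def rate_arrival)
  thus ?thesis using above m by (metis Suc_le_eq diff_Suc_1 le_neq_implies_less)
qed

lemma zero_row_succ:
  assumes row: "\<forall>j\<ge>m. p (m, j) = 0" and "m < c"
  shows "\<forall>j\<ge>Suc m. p (Suc m, j) = 0"
proof (intro allI impI)
  fix j assume "Suc m \<le> j"
  thus "p (Suc m, j) = 0"
  proof (induction rule: dec_induct)
    case base show ?case
    proof (rule zero_propagates_back[of "(m, m)"])
      show "(m, m) \<in> S" "(Suc m, Suc m) \<in> S" using assms(2) by (simp_all add: state_space_def)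
    qed (use row mu_pos in \<open>simp_all add: rate_switch_off\<close>)
  next
    case (step n) show ?case
    proof (rule zero_propagates_back[of "(Suc m, n)"])
      show "(Suc m, n) \<in> S" "(Suc m, Suc n) \<in> S" using step(1) assms(2) by (simp_all add: state_space_def)
    qed (use step mu_pos in \<open>simp_all add: rate_service\<close>)
  qed
qed

(* Irreducibility: a vanishing tail forces its row to vanish, then every row below, then every row. *)
lemma row_tail_nonzero:
  assumes "r \<le> c"
  shows "\<exists>j\<ge>c. p (r, j) \<noteq> 0"
proof (rule ccontr)
  assume "\<not> ?thesis"
  hence "\<forall>j\<ge>r. p (r, j) = 0" using row_zero_from_tail[of c r] assms by simp
  hence rows_below: "\<forall>j\<ge>r - d. p (r - d, j) = 0" for d
  proof (induction d)
    case (Suc d)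
    show ?case
    proof (cases "r - d = 0")
      case False
      thus ?thesis using zero_row_pred[OF Suc.IH[OF Suc.prems]] assms by simp
    qed (use Suc in simp)
  qed simp
  have rows: "\<forall>j\<ge>m. p (m, j) = 0" if "m \<le> c" for m
    using that
  proof (induction m)
    case 0 show ?case using rows_below[of r] by simp
  next
    case (Suc m) thus ?case using zero_row_succ[of m] by simp
  qed
  have "(p has_sum 0) S"
    by (rule has_sum_0) (use rows in \<open>auto simp: state_space_def\<close>)
  moreover have "(p has_sum 1) S" using stationary by (simp add: stationary_def)
  ultimately show False using has_sum_unique by fastforce
qed

lemma row_tail_summable: "k \<le> c \<Longrightarrow> summable (\<lambda>n. p (k, c + n))"
proof -
  assume "k \<le> c"
  hence sub: "range (\<lambda>n. (k, c + n)) \<subseteq> S" by (auto simp: state_space_def)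
  have "p summable_on S" using stationary by (auto simp: stationary_def summable_on_def)
  hence "p summable_on range (\<lambda>n. (k, c + n))" using sub by (rule summable_on_subset_banach)
  hence "(\<lambda>n. p (k, c + n)) summable_on UNIV"
    by (subst (asm) summable_on_reindex) (auto simp: inj_on_def o_def)
  moreover have "p (k, c + n) \<ge> 0" for n using \<open>k \<le> c\<close> p_nonneg by (simp add: state_space_def)
  ultimately show ?thesis by (subst (asm) summable_on_UNIV_nonneg_real_iff) auto
qed

lemma norm_Pihat_term_le:
  fixes z :: "'a::real_normed_field"
  assumes "k \<le> c" and "norm z \<le> 1"
  shows "norm (of_real (p (k, c + n)) * z ^ (c + n - k)) \<le> p (k, c + n)"
proof -
  have "p (k, c + n) \<ge> 0" using assms(1) p_nonneg by (simp add: state_space_def)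
  thus ?thesis using assms(2)
    by (simp add: norm_mult norm_power mult_left_le power_le_one)
qed

lemma Pihat_summable:
  fixes z :: "'a::{real_normed_field, banach}"
  assumes "k \<le> c" and "norm z \<le> 1"
  shows "summable (\<lambda>n. of_real (p (k, c + n)) * z ^ (c + n - k))"
  by (rule summable_comparison_test'[OF row_tail_summable[OF assms(1)]])
    (rule norm_Pihat_term_le[OF assms])

lemma continuous_on_Pihat:
  assumes "k \<le> c"
  shows "continuous_on (cball 0 1) (Pihat c p k :: complex \<Rightarrow> complex)"
proof -
  have "uniform_limit (cball 0 1) (\<lambda>n z. \<Sum>i<n. complex_of_real (p (k, c + i)) * z ^ (c + i - k))
          (Pihat c p k) sequentially"
    unfolding Pihat_def
    by (rule Weierstrass_m_test[OF _ row_tail_summable[OF assms]])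
      (use norm_Pihat_term_le[OF assms] in simp)
  thus ?thesis
    by (rule uniform_limit_theorem[rotated]) (auto intro!: always_eventually continuous_intros)
qed

lemma Pihat_row_equation:
  fixes z :: "'a::{real_normed_field, banach}"
  assumes k1: "1 \<le> k" and kc: "k < c" and z: "norm z \<le> 1"
  shows "(of_real (la + real k * mu + (real c - real k) * al) * z - of_real la * z^2
            - of_real (real k * mu)) * Pihat c p k z
       = of_real (la * p (k, c - 1)) * z ^ (c - k + 1)
         + of_real ((real c - real k + 1) * al) * Pihat c p (k - 1) z
         - of_real (real k * mu * p (k, c)) * z ^ (c - k)"
proof -
  (* Multiply the balance equation at (k, c + n) by z^(c + n - k + 1) and sum over n. *)
  define B where "B = la + real k * mu + (real c - real k) * al"
  define Q where "Q = (real c - real k + 1) * al"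
  define u where "u n = of_real (p (k, c + n)) * z ^ (c + n - k)" for n
  define v where "v n = of_real (p (k, c + n - 1)) * z ^ (c + n - k + 1)" for n
  define w where "w n = of_real (p (k - 1, c + n)) * z ^ (c + n - (k - 1))" for n
  have su: "summable u" and sw: "summable w"
    unfolding u_def w_def using kc z by (auto intro: Pihat_summable)
  have "v (Suc n) = z^2 * u n" for n
  proof -
    have "c + Suc n - k + 1 = (c + n - k) + 2" using kc by simp
    thus ?thesis unfolding v_def u_def by (simp add: power_add power2_eq_square algebra_simps)
  qed
  hence "(\<lambda>n. v (Suc n)) sums (z^2 * suminf u)"
    using sums_mult[OF summable_sums[OF su], of "z^2"] by simp
  hence sv: "v sums (z^2 * suminf u + v 0)" by (simp add: sums_Suc_iff)
  have su': "(\<lambda>n. u (Suc n)) sums (suminf u - u 0)"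
    using summable_sums[OF su] by (simp add: sums_Suc_iff)
  have termwise: "of_real B * (z * u n) = of_real la * v n + of_real Q * w n + of_real (real k * mu) * u (Suc n)" for n
  proof -
    have e1: "c + n - (k - 1) = c + n - k + 1" and e2: "c + Suc n - k = c + n - k + 1"
      using k1 kc by simp_all
    have "of_real B * (z * u n) = of_real (p (k, c + n) * B) * z ^ (c + n - k + 1)"
      unfolding u_def by (simp add: algebra_simps)
    also have "\<dots> = of_real (la * p (k, c + n - 1) + Q * p (k - 1, c + n) + real k * mu * p (k, c + n + 1))
                     * z ^ (c + n - k + 1)"
      using balance_busy_tail[OF k1 kc, of "c + n"] unfolding B_def Q_def by simp
    also have "\<dots> = of_real la * v n + of_real Q * w n + of_real (real k * mu) * u (Suc n)"
      unfolding v_def w_def u_def e1 e2 by (simp add: algebra_simps)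
    finally show ?thesis .
  qed
  have "(\<lambda>n. of_real B * (z * u n)) sums (of_real B * (z * suminf u))"
    by (intro sums_mult summable_sums su)
  moreover have "(\<lambda>n. of_real B * (z * u n)) sums
      (of_real la * (z^2 * suminf u + v 0) + of_real Q * suminf w + of_real (real k * mu) * (suminf u - u 0))"
    unfolding termwise by (intro sums_add sums_mult sv summable_sums sw su')
  ultimately have "of_real B * (z * suminf u)
      = of_real la * (z^2 * suminf u + v 0) + of_real Q * suminf w + of_real (real k * mu) * (suminf u - u 0)"
    by (rule sums_unique2)
  moreover have "Pihat c p k z = suminf u" "Pihat c p (k - 1) z = suminf w"
    unfolding Pihat_def u_def w_def by simp_all
  ultimately show ?thesis
    unfolding B_def[symmetric] Q_def[symmetric] by (simp add: u_def v_def algebra_simps)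
qed

lemma Pihat_pos:
  fixes x :: real
  assumes "r \<le> c" and "0 < x" and "x \<le> 1"
  shows "Pihat c p r x > 0"
proof -
  have nonneg: "p (r, c + n) \<ge> 0" for n using assms(1) p_nonneg by (simp add: state_space_def)
  obtain j where "c \<le> j" "p (r, j) \<noteq> 0" using row_tail_nonzero[OF assms(1)] by blast
  then obtain n where pos: "p (r, c + n) > 0" using nonneg by (metis le_Suc_ex less_eq_real_def)
  have "0 < (\<Sum>n. p (r, c + n) * x ^ (c + n - r))"
    by (rule suminf_pos2[of _ n])
      (use Pihat_summable[OF assms(1), of x] assms(2,3) nonneg pos in simp_all)
  thus ?thesis unfolding Pihat_def by simp
qed

lemma Pihat_idle_row:
  fixes z :: complex
  assumes c1: "1 \<le> c" and z: "norm z \<le> 1"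
  shows "Pihat c p 0 z = z ^ c * (of_real (p (0, c - 1)) / (of_real (zhat c la mu al 0) - z))"
proof -
  define r where "r = la / (la + real c * al)"
  have "la < la + real c * al" using al_pos c1 by simp
  hence r0: "0 < r" and r1: "r < 1" unfolding r_def using la_pos by simp_all
  have den: "la + real c * al \<noteq> 0" "la + al * real c \<noteq> 0"
    using \<open>la < la + real c * al\<close> la_pos by (simp_all add: mult.commute)
  have geometric: "p (0, c + n) = p (0, c - 1) * r ^ (n + 1)" for n
  proof (induction n)
    case 0
    show ?case using balance_idle[OF c1 c1] den c1 by (simp add: r_def field_simps)
  next
    case (Suc n)
    have "p (0, c + Suc n) = r * p (0, c + n)"
      using balance_idle[OF c1, of "c + Suc n"] den c1 by (simp add: r_def field_simps)
    thus ?case using Suc by simp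
  qed
  have rz: "norm (of_real r * z) < 1"
    using r0 r1 z by (simp add: norm_mult) (smt (verit) mult_left_le norm_ge_zero)
  have "(\<lambda>n. (of_real (p (0, c - 1) * r) * z ^ c) * (of_real r * z) ^ n) sums
        ((of_real (p (0, c - 1) * r) * z ^ c) * (1 / (1 - of_real r * z)))"
    by (intro sums_mult geometric_sums rz)
  moreover have "(\<lambda>n. (of_real (p (0, c - 1) * r) * z ^ c) * (of_real r * z) ^ n)
      = (\<lambda>n. of_real (p (0, c + n)) * z ^ (c + n - 0))"
    unfolding geometric by (auto simp: power_add power_mult_distrib algebra_simps)
  ultimately have "Pihat c p 0 z = (of_real (p (0, c - 1) * r) * z ^ c) * (1 / (1 - of_real r * z))"
    unfolding Pihat_def by (simp add: sums_unique[symmetric])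
  also have "\<dots> = z ^ c * (of_real (p (0, c - 1)) / ((1 - of_real r * z) / of_real r))"
    using rz r0 by (auto simp: field_simps)
  also have "(1 - of_real r * z) / of_real r = of_real (zhat c la mu al 0) - z"
  proof -
    have "zhat c la mu al 0 = 1 / r" by (simp add: zhat_def r_def)
    thus ?thesis using r0 by (simp add: field_simps) (metis of_real_1 of_real_mult)
  qed
  finally show ?thesis .
qed

lemma row_boundary_at_zk:
  assumes "1 \<le> k" and "k < c"
  shows "real k * mu * p (k, c) * zk c la mu al k ^ (c - k)
       = la * p (k, c - 1) * zk c la mu al k ^ (c - k + 1)
         + (real c - real k + 1) * al * Pihat c p (k - 1) (zk c la mu al k)"
proof -
  define z where "z = zk c la mu al k"
  have "0 < z" "z < 1" using zk_zhat_bounds[OF la_pos mu_pos al_pos assms] by (simp_all add: z_def)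
  moreover have "fk c la mu al k z = 0" using fk_factor[OF la_pos mu_pos al_pos assms] by (simp add: z_def)
  ultimately show ?thesis
    using Pihat_row_equation[OF assms, of z] unfolding z_def[symmetric] fk_def by simp
qed

definition ab_recursion_at :: "nat \<Rightarrow> nat \<Rightarrow> bool" where
  "ab_recursion_at i j \<longleftrightarrow>
     0 < acoef c la mu al p i j \<and> 0 < bcoef c la mu al p i j \<and> bcoef c la mu al p i j < la / (real i * mu)
     \<and> p (i, j) = acoef c la mu al p i j + bcoef c la mu al p i j * p (i, j - 1)"

lemma ab_recursion_at_c:
  assumes i1: "1 \<le> i" and ic: "i < c"
  shows "ab_recursion_at i c"
proof -
  define z where "z = zk c la mu al i"
  define Q where "Q = (real c - real i + 1) * al"
  have z0: "0 < z" and z1: "z < 1" using zk_zhat_bounds[OF la_pos mu_pos al_pos i1 ic] by (simp_all add: z_def)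
  have imu: "real i * mu > 0" using i1 mu_pos by simp
  have "Q > 0" using ic al_pos by (simp add: Q_def)
  moreover have "Pihat c p (i - 1) z > 0" using Pihat_pos[of "i - 1" z] ic z0 z1 by simp
  ultimately have "acoef c la mu al p i c > 0"
    using imu z0 by (simp add: acoef_bcoef_at_c z_def[symmetric] Q_def[symmetric])
  moreover have "0 < bcoef c la mu al p i c" "bcoef c la mu al p i c < la / (real i * mu)"
    using la_pos imu z0 z1 by (simp_all add: acoef_bcoef_at_c z_def[symmetric] divide_strict_right_mono)
  moreover have "p (i, c) = acoef c la mu al p i c + bcoef c la mu al p i c * p (i, c - 1)"
    using row_boundary_at_zk[OF i1 ic] mu_pos i1 z0
    unfolding acoef_bcoef_at_c z_def[symmetric] Q_def[symmetric]
    by (simp add: field_simps)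
  ultimately show ?thesis unfolding ab_recursion_at_def by blast
qed

lemma ab_recursion_at_below_c:
  assumes i1: "1 \<le> i" and "i < j" and "j < c" and next_level: "ab_recursion_at i (Suc j)"
  shows "ab_recursion_at i j"
proof -
  define a' where "a' = acoef c la mu al p i (Suc j)"
  define b' where "b' = bcoef c la mu al p i (Suc j)"
  define d where "d = la + real i * mu + (real j - real i) * al - real i * mu * b'"
  have IH: "0 < a'" "b' < la / (real i * mu)" "p (i, Suc j) = a' + b' * p (i, j)"
    using next_level unfolding ab_recursion_at_def a'_def b'_def by auto
  have imu: "real i * mu > 0" using i1 mu_pos by simp
  have "real i * mu * b' < la" using IH(2) imu by (simp add: field_simps)
  moreover have "(real j - real i) * al > 0" using assms(2) al_pos by simp
  ultimately have d_gt: "d > real i * mu" unfolding d_def by simp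
  hence d_pos: "d > 0" using imu by simp
  have acoef: "acoef c la mu al p i j = ((real j - real i + 1) * al * p (i - 1, j) + real i * mu * a') / d"
    and bcoef: "bcoef c la mu al p i j = la / d"
    using acoef_bcoef_below_c[OF assms(3), of la mu al p i] unfolding a'_def b'_def d_def by simp_all
  have "p (i - 1, j) \<ge> 0" using p_nonneg[of "(i - 1, j)"] assms(2,3) by (simp add: state_space_def) linarith
  hence "acoef c la mu al p i j > 0"
    unfolding acoef using d_pos IH(1) assms(2) al_pos mu_pos i1
    by (intro divide_pos_pos add_nonneg_pos mult_nonneg_nonneg mult_pos_pos) auto
  moreover have "0 < bcoef c la mu al p i j" "bcoef c la mu al p i j < la / (real i * mu)"
    unfolding bcoef using d_gt imu la_pos by (simp_all add: divide_strict_left_mono)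
  moreover have "p (i, j) = acoef c la mu al p i j + bcoef c la mu al p i j * p (i, j - 1)"
  proof -
    have "p (i, j) * d = la * p (i, j - 1) + (real j - real i + 1) * al * p (i - 1, j) + real i * mu * a'"
      using balance_busy_below_c[OF i1 assms(2)] assms(3) IH(3) unfolding d_def
      by (simp add: algebra_simps)
    thus ?thesis unfolding acoef bcoef using d_gt imu by (simp add: field_simps)
  qed
  ultimately show ?thesis unfolding ab_recursion_at_def by blast
qed

lemma ab_recursion:
  assumes "1 \<le> i" and "i < c" and "i < j" and "j \<le> c"
  shows "ab_recursion_at i j"
  using \<open>j \<le> c\<close> \<open>i < j\<close>
proof (induction rule: inc_induct)
  case base show ?case using ab_recursion_at_c[OF assms(1,2)] .
next
  case (step j) thus ?case using ab_recursion_at_below_c[OF assms(1)] by simp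
qed

definition pf_expansion :: "nat \<Rightarrow> complex \<Rightarrow> complex" where
  "pf_expansion k z = z ^ (c - k) *
     (\<Sum>j\<le>k. of_real (Acoef_ext c la mu al p k j) / (of_real (zhat c la mu al j) - z))"

lemma continuous_on_pf_expansion:
  assumes "k < c"
  shows "continuous_on (cball 0 1) (pf_expansion k)"
proof -
  have "of_real (zhat c la mu al j) - z \<noteq> 0" if "j \<le> k" "z \<in> cball 0 1" for j and z :: complex
    using zhat_outside_unit_disc[OF la_pos mu_pos al_pos, of j c z] that assms by simp
  thus ?thesis unfolding pf_expansion_def by (intro continuous_intros) auto
qed

lemma pf_expansion_pred:
  assumes "1 \<le> k" and "k \<le> c"
  shows "pf_expansion (k - 1) z = z ^ (c - k + 1) *
     (\<Sum>j\<le>k. of_real (Acoef_ext c la mu al p (k - 1) j) / (of_real (zhat c la mu al j) - z))"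
proof -
  obtain m where k: "k = Suc m" using assms(1) by (cases k) auto
  moreover have "c - m = Suc (c - k)" using assms(2) k by simp
  ultimately show ?thesis using Acoef_ext_eq_0[of m k] by (simp add: pf_expansion_def)
qed

lemma Pihat_pf_defect:
  assumes inj: "inj_on (zhat c la mu al) {0..c - 1}" and k1: "1 \<le> k" and kc: "k < c"
    and IH: "\<And>z. norm z \<le> 1 \<Longrightarrow> Pihat c p (k - 1) z = pf_expansion (k - 1) z"
  obtains E where "\<And>z. norm z \<le> 1 \<Longrightarrow>
    (z - of_real (zk c la mu al k)) * (z - of_real (zhat c la mu al k)) * (Pihat c p k z - pf_expansion k z)
      = z ^ (c - k) * E"
proof -
  define B where "B = la + real k * mu + (real c - real k) * al"
  define Q where "Q = (real c - real k + 1) * al"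
  define F where "F z = of_real B * z - of_real la * z^2 - of_real (real k * mu)" for z :: complex
  define w where "w j = (of_real (zhat c la mu al j) :: complex)" for j
  define A where "A j = (of_real (Acoef_ext c la mu al p k j) :: complex)" for j
  define A' where "A' j = (of_real (Acoef_ext c la mu al p (k - 1) j) :: complex)" for j
  define S where "S z = (\<Sum>j\<le>k. A j / (w j - z))" for z
  define S' where "S' z = (\<Sum>j\<le>k. A' j / (w j - z))" for z
  define K where "K = (\<Sum>j\<le>k. A j * (of_real la * w j - of_real B) + of_real Q * A' j)"
  define E where "E = (K + of_real (real k * mu * p (k, c))) / of_real la"
  have coeff: "A j * F (w j) = of_real Q * A' j * w j" if "j \<le> k" for j
  proof -
    have "F (w j) = of_real (fk c la mu al k (zhat c la mu al j))"
      unfolding F_def w_def B_def fk_def by simp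
    thus ?thesis
      using arg_cong[OF Acoef_ext_times_fk[OF la_pos mu_pos al_pos k1 kc that inj, of p], of of_real]
      unfolding A_def A'_def w_def Q_def by simp
  qed
  have "F z * (Pihat c p k z - pf_expansion k z) = z ^ (c - k) * (- K - of_real (real k * mu * p (k, c)))"
    if z: "norm z \<le> 1" for z
  proof -
    have pf: "F z * S z - of_real Q * z * S' z = of_real la * z * of_real (p (k, c - 1)) + K"
      using sum_quadratic_partial_fractions[of F "of_real B" "of_real la" "of_real (real k * mu)"
          "{..k}" w z A "of_real Q" A'] coeff
        zhat_outside_unit_disc[OF la_pos mu_pos al_pos _ z] kc sum_Acoef_ext[OF k1, of c la mu al p]
      unfolding S_def S'_def K_def F_def A_def w_def by (auto simp flip: of_real_sum)
    have IH': "Pihat c p (k - 1) z = z ^ (c - k + 1) * S' z"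
      using IH[OF z] pf_expansion_pred[OF k1] kc unfolding S'_def A'_def w_def by simp
    have row: "F z * Pihat c p k z = of_real (la * p (k, c - 1)) * z ^ (c - k + 1)
        + of_real Q * Pihat c p (k - 1) z - of_real (real k * mu * p (k, c)) * z ^ (c - k)"
      using Pihat_row_equation[OF k1 kc z] unfolding F_def B_def Q_def .
    have "pf_expansion k z = z ^ (c - k) * S z" unfolding pf_expansion_def S_def A_def w_def ..
    hence "F z * (Pihat c p k z - pf_expansion k z) = F z * Pihat c p k z - z ^ (c - k) * (F z * S z)"
      by (simp add: algebra_simps)
    also have "\<dots> = z ^ (c - k) * (- K - of_real (real k * mu * p (k, c)))"
      unfolding row IH' diff_eq_eq[THEN iffD1, OF pf] by (simp add: algebra_simps)
    finally show ?thesis .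
  qed
  moreover have "F z = - of_real la * ((z - of_real (zk c la mu al k)) * (z - of_real (zhat c la mu al k)))" for z
    using fk_factor_of_real[OF la_pos mu_pos al_pos k1 kc, of z] unfolding F_def B_def by simp
  ultimately show ?thesis
    using that[of E] la_pos unfolding E_def by (simp add: field_simps)
qed

lemma Pihat_eq_pf_expansion_step:
  assumes inj: "inj_on (zhat c la mu al) {0..c - 1}" and k1: "1 \<le> k" and kc: "k < c"
    and IH: "\<And>z. norm z \<le> 1 \<Longrightarrow> Pihat c p (k - 1) z = pf_expansion (k - 1) z"
    and z: "norm z \<le> 1"
  shows "Pihat c p k z = pf_expansion k z"
proof -
  define r where "r = zk c la mu al k"
  have r0: "0 < r" and r1: "r < 1" using zk_zhat_bounds[OF la_pos mu_pos al_pos k1 kc] by (simp_all add: r_def)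
  obtain E where E: "\<And>z. norm z \<le> 1 \<Longrightarrow>
      (z - of_real r) * (z - of_real (zhat c la mu al k)) * (Pihat c p k z - pf_expansion k z) = z ^ (c - k) * E"
    using Pihat_pf_defect[OF inj k1 kc IH] unfolding r_def by blast
  from E[of "of_real r"] have "E = 0" using r0 r1 by simp
  hence off_root: "Pihat c p k y = pf_expansion k y" if "norm y \<le> 1" "y \<noteq> of_real r" for y
    using E[OF that(1)] zhat_outside_unit_disc[OF la_pos mu_pos al_pos kc that(1)] that(2) by simp
  show ?thesis
  proof (cases "z = of_real r")
    case True
    have "of_real r \<in> interior (cball (0::complex) 1)" using r0 r1 by simp
    from continuous_on_eq_at_interior_point[OF continuous_on_Pihat[of k] continuous_on_pf_expansion[OF kc] this]
    show ?thesis unfolding True using off_root kc by simp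
  qed (use off_root z in simp)
qed

lemma Pihat_eq_pf_expansion:
  assumes inj: "inj_on (zhat c la mu al) {0..c - 1}" and "k < c" and "norm z \<le> 1"
  shows "Pihat c p k z = pf_expansion k z"
  using assms(2,3)
proof (induction k arbitrary: z)
  case 0
  thus ?case using Pihat_idle_row[of z] by (simp add: pf_expansion_def Acoef_ext_def)
next
  case (Suc k)
  thus ?case using Pihat_eq_pf_expansion_step[OF inj, of "Suc k"] by simp
qed

end

theorem lemma3p2:
  fixes c :: nat and la mu al :: real and p :: "nat \<times> nat \<Rightarrow> real" and i :: nat
  assumes "c \<ge> 3" and "la > 0" and "mu > 0" and "al > 0" and "la < real c * mu"
    and "stationary c la mu al p"
    and "2 \<le> i" and "i \<le> c - 1"
  shows "(\<forall>j\<in>{i+1..c}. p (i, j) = acoef c la mu al p i j + bcoef c la mu al p i j * p (i, j - 1))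
       \<and> (\<forall>j\<in>{i+1..c}. acoef c la mu al p i j > 0 \<and> 0 < bcoef c la mu al p i j
                          \<and> bcoef c la mu al p i j < la / (real i * mu))
       \<and> (inj_on (zhat c la mu al) {0..c-1} \<longrightarrow>
           (\<forall>z::complex. norm z \<le> 1 \<longrightarrow>
              Pihat c p i z = z ^ (c - i) *
                (\<Sum>j=0..i. complex_of_real (Acoef c la mu al p i j)
                            / (complex_of_real (zhat c la mu al j) - z))))"
proof -
  interpret on_off_queue c la mu al p using assms(2-4,6) by unfold_locales
  have i1: "1 \<le> i" and ic: "i < c" using assms(1,7,8) by simp_all
  have "pf_expansion i z = z ^ (c - i) *
      (\<Sum>j=0..i. of_real (Acoef c la mu al p i j) / (of_real (zhat c la mu al j) - z))" for z
    unfolding pf_expansion_def Acoef_ext_def atLeast0AtMost using i1 by simp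
  thus ?thesis using ab_recursion[OF i1 ic] Pihat_eq_pf_expansion[OF _ ic] by (auto simp: ab_recursion_at_def)
qed

end
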